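(* Let $G$ be a connected chordal graph with at least two vertices. A vertex $v\in V(G)$ is an $\mathcal{F}$-branch leaf of some BFS ordering of $G$ if and only if the radius of the induced subgraph $G[N_G(v)]$ is at most two.
   Context: Graphs are finite, simple, undirected; $N_G(v)$ is the open neighborhood of $v$. A graph is chordal if it has no induced cycle of length at least 4. The eccentricity of a vertex is its largest distance to any other vertex, and the radius of a graph is the smallest eccentricity of its vertices (infinite if the graph is disconnected). A vertex ordering of $G$ is a bijection $\sigma:\{1,\dots,n\}\to V(G)$; $u\prec_\sigma w$ means $u$ comes before $w$. BFS orderings are produced by the label search: initially all labels are $\emptyset$; for $i=1,\dots,n$ choose any unnumbered vertex $x$ such that there is no unnumbered $y$ with $\mathrm{label}(x)\prec\mathrm{label}(y)$, set $\sigma(i)=x$, and add $i$ to the labels of the unnumbered neighbors of $x$, where $A\prec B$ iff ($A=\emptyset$ and $B\neq\emptyset$) or $\min(A)>\min(B)$. The $\mathcal{F}$-tree of $\sigma$ is the spanning tree containing, for each $v\neq\sigma(1)$, the edge from $v$ to its leftmost neighbor in $\sigma$. A vertex $v\neq\sigma(1)$ that is a leaf of the $\mathcal{F}$-tree is an $\mathcal{F}$-branch leaf of $\sigma$. *)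

theory Defs
  imports Main "HOL-Library.Extended_Nat"
begin

definition simple_graph :: "'a set \<Rightarrow> ('a \<Rightarrow> 'a \<Rightarrow> bool) \<Rightarrow> bool" where
  "simple_graph V E \<longleftrightarrow> finite V \<and> (\<forall>x y. E x y \<longrightarrow> x \<in> V \<and> y \<in> V)
     \<and> (\<forall>x y. E x y \<longrightarrow> E y x) \<and> (\<forall>x. \<not> E x x)"

definition nbhd :: "('a \<Rightarrow> 'a \<Rightarrow> bool) \<Rightarrow> 'a \<Rightarrow> 'a set" where
  "nbhd E v = {w. E v w}"

definition induced_adj :: "('a \<Rightarrow> 'a \<Rightarrow> bool) \<Rightarrow> 'a set \<Rightarrow> 'a \<Rightarrow> 'a \<Rightarrow> bool" where
  "induced_adj E S x y \<longleftrightarrow> E x y \<and> x \<in> S \<and> y \<in> S"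

definition walk :: "'a set \<Rightarrow> ('a \<Rightarrow> 'a \<Rightarrow> bool) \<Rightarrow> 'a list \<Rightarrow> bool" where
  "walk V E p \<longleftrightarrow> p \<noteq> [] \<and> set p \<subseteq> V \<and> (\<forall>i. Suc i < length p \<longrightarrow> E (p ! i) (p ! Suc i))"

definition connected_graph :: "'a set \<Rightarrow> ('a \<Rightarrow> 'a \<Rightarrow> bool) \<Rightarrow> bool" where
  "connected_graph V E \<longleftrightarrow> (\<forall>u\<in>V. \<forall>w\<in>V. \<exists>p. walk V E p \<and> hd p = u \<and> last p = w)"

text \<open>Distance (infinite if no walk exists), eccentricity, radius.\<close>
definition gdist :: "'a set \<Rightarrow> ('a \<Rightarrow> 'a \<Rightarrow> bool) \<Rightarrow> 'a \<Rightarrow> 'a \<Rightarrow> enat" where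
  "gdist V E u w = (INF p \<in> {p. walk V E p \<and> hd p = u \<and> last p = w}. enat (length p - 1))"

definition ecc :: "'a set \<Rightarrow> ('a \<Rightarrow> 'a \<Rightarrow> bool) \<Rightarrow> 'a \<Rightarrow> enat" where
  "ecc V E v = (SUP w \<in> V. gdist V E v w)"

definition radius :: "'a set \<Rightarrow> ('a \<Rightarrow> 'a \<Rightarrow> bool) \<Rightarrow> enat" where
  "radius V E = (INF v \<in> V. ecc V E v)"

definition induced_cycle :: "'a set \<Rightarrow> ('a \<Rightarrow> 'a \<Rightarrow> bool) \<Rightarrow> 'a list \<Rightarrow> bool" where
  "induced_cycle V E xs \<longleftrightarrow> length xs \<ge> 3 \<and> distinct xs \<and> set xs \<subseteq> V \<and>
     (\<forall>i < length xs. \<forall>j < length xs.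
        E (xs ! i) (xs ! j) \<longleftrightarrow> (j = Suc i mod length xs \<or> i = Suc j mod length xs))"

definition chordal :: "'a set \<Rightarrow> ('a \<Rightarrow> 'a \<Rightarrow> bool) \<Rightarrow> bool" where
  "chordal V E \<longleftrightarrow> \<not> (\<exists>xs. induced_cycle V E xs \<and> length xs \<ge> 4)"

definition vertex_ordering :: "'a set \<Rightarrow> (nat \<Rightarrow> 'a) \<Rightarrow> bool" where
  "vertex_ordering V \<sigma> \<longleftrightarrow> bij_betw \<sigma> {1..card V} V"

definition bfs_label :: "('a \<Rightarrow> 'a \<Rightarrow> bool) \<Rightarrow> (nat \<Rightarrow> 'a) \<Rightarrow> nat \<Rightarrow> 'a \<Rightarrow> nat set" where
  "bfs_label E \<sigma> i y = {j. 1 \<le> j \<and> j < i \<and> E (\<sigma> j) y}"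

definition bfs_prec :: "nat set \<Rightarrow> nat set \<Rightarrow> bool" where
  "bfs_prec A B \<longleftrightarrow> (A = {} \<and> B \<noteq> {}) \<or> (A \<noteq> {} \<and> B \<noteq> {} \<and> Min A > Min B)"

definition bfs_ordering :: "'a set \<Rightarrow> ('a \<Rightarrow> 'a \<Rightarrow> bool) \<Rightarrow> (nat \<Rightarrow> 'a) \<Rightarrow> bool" where
  "bfs_ordering V E \<sigma> \<longleftrightarrow> vertex_ordering V \<sigma> \<and>
     (\<forall>i \<in> {1..card V}. \<forall>y \<in> V - \<sigma> ` {1..<i}.
        \<not> bfs_prec (bfs_label E \<sigma> i (\<sigma> i)) (bfs_label E \<sigma> i y))"

definition leftmost_nbr :: "'a set \<Rightarrow> ('a \<Rightarrow> 'a \<Rightarrow> bool) \<Rightarrow> (nat \<Rightarrow> 'a) \<Rightarrow> 'a \<Rightarrow> 'a" where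
  "leftmost_nbr V E \<sigma> v = \<sigma> (LEAST j. j \<in> {1..card V} \<and> E (\<sigma> j) v)"

definition F_tree :: "'a set \<Rightarrow> ('a \<Rightarrow> 'a \<Rightarrow> bool) \<Rightarrow> (nat \<Rightarrow> 'a) \<Rightarrow> 'a set set" where
  "F_tree V E \<sigma> = {{v, leftmost_nbr V E \<sigma> v} | v. v \<in> V - {\<sigma> 1}}"

definition F_branch_leaf :: "'a set \<Rightarrow> ('a \<Rightarrow> 'a \<Rightarrow> bool) \<Rightarrow> (nat \<Rightarrow> 'a) \<Rightarrow> 'a \<Rightarrow> bool" where
  "F_branch_leaf V E \<sigma> v \<longleftrightarrow> v \<in> V \<and> v \<noteq> \<sigma> 1 \<and> card {e \<in> F_tree V E \<sigma>. v \<in> e} = 1"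

end

theory Submission
  imports Defs
begin

(* Each vertex other than \<sigma> 1 hangs in the F-tree below its leftmost
   neighbour, and leftmost neighbours are monotone along \<sigma>; hence the F-tree depth changes by at
   most one along an edge. In a chordal graph no induced path on at least three vertices has both
   ends at the same depth and its interior strictly deeper: the parents of the two ends would
   either close an induced cycle of length at least four or extend the path to one of the same
   kind one level higher. If v has no child, this forces every neighbour of v (one level above,
   at, or below v) to be within distance two of the parent of v inside N(v).
   Conversely, if c has eccentricity at most two in G[N(v)], a BFS ordering that starts at c and
   numbers all other neighbours of c before v exists; in it every neighbour of v already has a
   neighbour numbered before v, so v has no child.
*)

section \<open>Induced paths in chordal graphs\<close>

lemma simple_graph_sym: "simple_graph V E \<Longrightarrow> E x y \<longleftrightarrow> E y x"
  by (auto simp: simple_graph_def)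

lemma simple_graph_irrefl: "simple_graph V E \<Longrightarrow> \<not> E x x"
  by (simp add: simple_graph_def)

lemma simple_graph_edge_in: "simple_graph V E \<Longrightarrow> E x y \<Longrightarrow> x \<in> V \<and> y \<in> V"
  by (simp add: simple_graph_def)

definition induced_path :: "'a set \<Rightarrow> ('a \<Rightarrow> 'a \<Rightarrow> bool) \<Rightarrow> 'a list \<Rightarrow> bool" where
  "induced_path V E Q \<longleftrightarrow> distinct Q \<and> set Q \<subseteq> V \<and>
     (\<forall>i<length Q. \<forall>j<length Q. E (Q ! i) (Q ! j) \<longleftrightarrow> j = Suc i \<or> i = Suc j)"

lemma induced_path_single: "simple_graph V E \<Longrightarrow> x \<in> V \<Longrightarrow> induced_path V E [x]"
  by (simp add: induced_path_def simple_graph_irrefl)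

lemma induced_path_Cons:
  assumes G: "simple_graph V E" and Q: "induced_path V E Q" "Q \<noteq> []"
    and x: "x \<in> V" "x \<notin> set Q" "E x (hd Q)" "\<forall>z\<in>set (tl Q). \<not> E x z"
  shows "induced_path V E (x # Q)"
proof -
  obtain y R where Q_eq: "Q = y # R"
    using Q(2) by (cases Q) auto
  have far: "\<not> E x (Q ! k)" "\<not> E (Q ! k) x" if "0 < k" "k < length Q" for k
    using that x(4) nth_mem[of "k - 1" R] simple_graph_sym[OF G]
    unfolding Q_eq by (auto simp: nth_Cons')
  have "E ((x # Q) ! i) ((x # Q) ! j) \<longleftrightarrow> j = Suc i \<or> i = Suc j"
    if "i < Suc (length Q)" "j < Suc (length Q)" for i j
    using that Q x far[of "i - 1"] far[of "j - 1"] simple_graph_irrefl[OF G] simple_graph_sym[OF G]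
    unfolding induced_path_def Q_eq
    by (cases i; cases j) (auto simp: nth_Cons')
  then show ?thesis
    using Q x unfolding induced_path_def by (simp only: length_Cons) auto
qed

lemma induced_path_Cons_Cons:
  "simple_graph V E \<Longrightarrow> induced_path V E (y # R) \<Longrightarrow> x \<in> V \<Longrightarrow> x \<notin> set (y # R) \<Longrightarrow>
     E x y \<Longrightarrow> \<forall>z\<in>set R. \<not> E x z \<Longrightarrow> induced_path V E (x # y # R)"
  using induced_path_Cons[of V E "y # R" x] by simp

lemma induced_path_rev: "induced_path V E (rev Q) \<longleftrightarrow> induced_path V E Q"
proof -
  have "induced_path V E (rev Q)" if Q: "induced_path V E Q" for Q :: "'a list"
  proof -
    have "E (rev Q ! i) (rev Q ! j) \<longleftrightarrow> j = Suc i \<or> i = Suc j"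
      if "i < length Q" "j < length Q" for i j
      using that Q unfolding induced_path_def rev_nth[OF that(1)] rev_nth[OF that(2)] by auto
    then show ?thesis
      using Q unfolding induced_path_def by simp
  qed
  then show ?thesis
    by (metis rev_rev_ident)
qed

lemma induced_path_snoc:
  assumes G: "simple_graph V E" and Q: "induced_path V E Q" "Q \<noteq> []"
    and x: "x \<in> V" "x \<notin> set Q" "E (last Q) x" "\<forall>z\<in>set (butlast Q). \<not> E x z"
  shows "induced_path V E (Q @ [x])"
proof -
  have "set (tl (rev Q)) = set (butlast Q)"
    by (metis butlast_rev rev_rev_ident set_rev)
  then have "induced_path V E (x # rev Q)"
    using induced_path_Cons[OF G, of "rev Q" x] Q x simple_graph_sym[OF G]
    by (simp add: induced_path_rev hd_rev)
  then show ?thesis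
    using induced_path_rev[of V E "x # rev Q"] by simp
qed

lemma chordal_no_closing_vertex:
  assumes G: "simple_graph V E" and "chordal V E"
    and Q: "induced_path V E Q" "3 \<le> length Q"
    and t: "t \<in> V" "t \<notin> set Q" "E t (hd Q)" "E t (last Q)"
      "\<forall>y\<in>set Q. y \<noteq> hd Q \<and> y \<noteq> last Q \<longrightarrow> \<not> E t y"
  shows False
proof -
  define m where "m = length Q"
  have "Q \<noteq> []"
    using Q(2) by auto
  have t_nth: "E t (Q ! j) \<longleftrightarrow> j = 0 \<or> j = m - 1" if "j < m" for j
  proof -
    have "Q ! j = hd Q \<longleftrightarrow> j = 0" "Q ! j = last Q \<longleftrightarrow> j = m - 1"
      using that Q \<open>Q \<noteq> []\<close> nth_eq_iff_index_eq[of Q j] unfolding induced_path_def m_def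
      by (auto simp: hd_conv_nth last_conv_nth)
    then show ?thesis
      using t that nth_mem[of j Q] unfolding m_def by metis
  qed
  have "induced_cycle V E (Q @ [t])"
    unfolding induced_cycle_def
  proof (intro conjI allI impI)
    fix i j assume "i < length (Q @ [t])" "j < length (Q @ [t])"
    then show "E ((Q @ [t]) ! i) ((Q @ [t]) ! j) \<longleftrightarrow>
        j = Suc i mod length (Q @ [t]) \<or> i = Suc j mod length (Q @ [t])"
      using Q t_nth simple_graph_sym[OF G] simple_graph_irrefl[OF G]
      unfolding induced_path_def m_def
      by (cases "i < length Q"; cases "j < length Q") (auto simp: nth_append mod_Suc)
  qed (use Q t in \<open>auto simp: induced_path_def\<close>)
  then show False
    using \<open>chordal V E\<close> Q(2) unfolding chordal_def by fastforce
qed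

section \<open>Walks and distances\<close>

lemma walk_single: "walk V E [a] \<longleftrightarrow> a \<in> V"
  by (simp add: walk_def)

lemma walk_Cons_Cons: "walk V E (a # b # p) \<longleftrightarrow> a \<in> V \<and> E a b \<and> walk V E (b # p)"
  unfolding walk_def by (auto simp: nth_Cons' less_Suc_eq_0_disj split: if_splits)

lemma walk_leaves_set:
  assumes "walk V E p" "hd p \<in> S" "last p \<notin> S"
  shows "\<exists>a\<in>S. \<exists>b\<in>V - S. E a b"
  using assms
proof (induction p rule: induct_list012)
  case (3 a b p)
  then have "walk V E (b # p)"
    by (simp add: walk_Cons_Cons)
  then have "b \<in> V"
    by (simp add: walk_def)
  with 3 show ?case
    by (cases "b \<in> S") (auto simp: walk_Cons_Cons)
qed (auto simp: walk_def)

lemma walk_length_le_3: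
  assumes "walk V E p" "length p \<le> 3"
  shows "hd p = last p \<or> E (hd p) (last p) \<or> (\<exists>y\<in>V. E (hd p) y \<and> E y (last p))"
  using assms
proof (induction p rule: induct_list012)
  case (3 a b p)
  then show ?case
    by (cases p) (auto simp: walk_Cons_Cons walk_single)
qed (auto simp: walk_def)

lemma gdist_le_2_iff:
  "gdist V E u w \<le> 2 \<longleftrightarrow>
     u \<in> V \<and> w \<in> V \<and> (u = w \<or> E u w \<or> (\<exists>y\<in>V. E u y \<and> E y w))"
proof
  assume "gdist V E u w \<le> 2"
  then have "gdist V E u w < 3"
    by (rule order.strict_trans1) simp
  then obtain p where p: "walk V E p" "hd p = u" "last p = w" "length p \<le> 3"
    unfolding gdist_def INF_less_iff by (auto simp: numeral_eq_enat)
  then have "u \<in> V" "w \<in> V"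
    by (auto simp: walk_def)
  then show "u \<in> V \<and> w \<in> V \<and> (u = w \<or> E u w \<or> (\<exists>y\<in>V. E u y \<and> E y w))"
    using walk_length_le_3[OF p(1,4)] p(2,3) by blast
next
  assume "u \<in> V \<and> w \<in> V \<and> (u = w \<or> E u w \<or> (\<exists>y\<in>V. E u y \<and> E y w))"
  then consider "u \<in> V" "u = w" | "u \<in> V" "w \<in> V" "E u w"
    | y where "u \<in> V" "w \<in> V" "y \<in> V" "E u y" "E y w"
    by blast
  then obtain p where p: "walk V E p" "hd p = u" "last p = w" "length p \<le> 3"
  proof cases
    case 1
    then show ?thesis
      using that[of "[u]"] by (simp add: walk_single)
  next
    case 2
    then show ?thesis
      using that[of "[u, w]"] by (simp add: walk_Cons_Cons walk_single)
  next
    case (3 y)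
    then show ?thesis
      using that[of "[u, y, w]"] by (simp add: walk_Cons_Cons walk_single)
  qed
  then have "gdist V E u w \<le> enat (length p - 1)"
    unfolding gdist_def by (intro INF_lower) simp
  also have "\<dots> \<le> 2"
    using p(4) by (simp add: numeral_eq_enat)
  finally show "gdist V E u w \<le> 2" .
qed

lemma radius_le_enat_iff:
  "radius V E \<le> enat n \<longleftrightarrow> (\<exists>c\<in>V. \<forall>w\<in>V. gdist V E c w \<le> enat n)"
proof -
  have le_iff_less_Suc: "x \<le> enat n \<longleftrightarrow> x < enat (Suc n)" for x
    by (cases x) auto
  have "radius V E \<le> enat n \<longleftrightarrow> radius V E < enat (Suc n)"
    by (rule le_iff_less_Suc)
  also have "\<dots> \<longleftrightarrow> (\<exists>c\<in>V. ecc V E c < enat (Suc n))"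
    unfolding radius_def INF_less_iff ..
  also have "\<dots> \<longleftrightarrow> (\<exists>c\<in>V. \<forall>w\<in>V. gdist V E c w \<le> enat n)"
    unfolding le_iff_less_Suc[symmetric] ecc_def SUP_le_iff ..
  finally show ?thesis .
qed

definition nbhd_center :: "('a \<Rightarrow> 'a \<Rightarrow> bool) \<Rightarrow> 'a \<Rightarrow> 'a \<Rightarrow> bool" where
  "nbhd_center E v c \<longleftrightarrow>
     E v c \<and> (\<forall>w. E v w \<longrightarrow> w = c \<or> E c w \<or> (\<exists>y. E v y \<and> E c y \<and> E y w))"

lemma radius_nbhd_le_2_iff:
  "radius (nbhd E v) (induced_adj E (nbhd E v)) \<le> 2 \<longleftrightarrow> (\<exists>c. nbhd_center E v c)"
  unfolding radius_le_enat_iff[of _ _ 2, unfolded enat_numeral] gdist_le_2_iff nbhd_center_def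
  by (auto simp: nbhd_def induced_adj_def)

section \<open>BFS orderings and F-tree depth\<close>

lemma not_bfs_prec_nonempty:
  assumes "finite B" "B \<noteq> {}" "\<not> bfs_prec A B"
  shows "A \<noteq> {} \<and> Min A \<le> Min B"
  using assms unfolding bfs_prec_def by (auto simp: not_less)

lemma finite_bfs_label: "finite (bfs_label E \<sigma> i y)"
  unfolding bfs_label_def by (rule finite_subset[of _ "{..<i}"]) auto

locale bfs_graph =
  fixes V :: "'a set" and E :: "'a \<Rightarrow> 'a \<Rightarrow> bool" and \<sigma> :: "nat \<Rightarrow> 'a"
  assumes graph: "simple_graph V E" and connected: "connected_graph V E"
    and bfs: "bfs_ordering V E \<sigma>"
begin

definition pos :: "'a \<Rightarrow> nat" where
  "pos = inv_into {1..card V} \<sigma>"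

definition parent_idx :: "'a \<Rightarrow> nat" where
  "parent_idx y = (LEAST j. j \<in> {1..card V} \<and> E (\<sigma> j) y)"

abbreviation parent :: "'a \<Rightarrow> 'a" where
  "parent \<equiv> leftmost_nbr V E \<sigma>"

lemma parent_eq: "parent y = \<sigma> (parent_idx y)"
  by (simp add: leftmost_nbr_def parent_idx_def)

lemma bij: "bij_betw \<sigma> {1..card V} V"
  using bfs unfolding bfs_ordering_def vertex_ordering_def by blast

lemma \<sigma>_in: "i \<in> {1..card V} \<Longrightarrow> \<sigma> i \<in> V"
  using bij bij_betwE by blast

lemma pos_in: "y \<in> V \<Longrightarrow> pos y \<in> {1..card V}"
  unfolding pos_def using bij by (metis bij_betw_def inv_into_into)

lemma \<sigma>_pos: "y \<in> V \<Longrightarrow> \<sigma> (pos y) = y"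
  unfolding pos_def using bij by (metis bij_betw_def f_inv_into_f)

lemma pos_\<sigma>: "i \<in> {1..card V} \<Longrightarrow> pos (\<sigma> i) = i"
  unfolding pos_def using bij by (simp add: bij_betw_def)

lemma pos_eq_1_iff: "y \<in> V \<Longrightarrow> pos y = 1 \<longleftrightarrow> y = \<sigma> 1"
  using pos_in \<sigma>_pos pos_\<sigma>[of 1] by force

lemma bfs_rule:
  "i \<in> {1..card V} \<Longrightarrow> y \<in> V - \<sigma> ` {1..<i} \<Longrightarrow>
     \<not> bfs_prec (bfs_label E \<sigma> i (\<sigma> i)) (bfs_label E \<sigma> i y)"
  using bfs unfolding bfs_ordering_def by blast

lemma not_numbered_before: "y \<in> V \<Longrightarrow> i \<le> pos y \<Longrightarrow> y \<notin> \<sigma> ` {1..<i}"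
  using pos_\<sigma> \<sigma>_pos pos_in by fastforce

lemma earlier_nbr_exists:
  assumes y: "y \<in> V" "y \<noteq> \<sigma> 1"
  shows "\<exists>j\<in>{1..<pos y}. E (\<sigma> j) y"
proof -
  define i where "i = pos y"
  have i: "i \<in> {1..card V}" "\<sigma> i = y" "i \<noteq> 1"
    using y pos_in \<sigma>_pos pos_eq_1_iff unfolding i_def by auto
  obtain p where "walk V E p" "hd p = \<sigma> 1" "last p = y"
    using connected y \<sigma>_in[of 1] i(1) unfolding connected_graph_def by fastforce
  moreover have "\<sigma> 1 \<in> \<sigma> ` {1..<i}" "y \<notin> \<sigma> ` {1..<i}"
    using i not_numbered_before[OF y(1)] unfolding i_def by auto
  ultimately obtain a b where ab: "a \<in> \<sigma> ` {1..<i}" "b \<in> V - \<sigma> ` {1..<i}" "E a b"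
    using walk_leaves_set by metis
  then have b_labelled: "bfs_label E \<sigma> i b \<noteq> {}"
    unfolding bfs_label_def by auto
  have "\<not> bfs_prec (bfs_label E \<sigma> i y) (bfs_label E \<sigma> i b)"
    using bfs_rule[OF i(1) ab(2)] i(2) by simp
  then have "bfs_label E \<sigma> i y \<noteq> {}"
    using not_bfs_prec_nonempty[OF finite_bfs_label b_labelled] by simp
  then show ?thesis
    unfolding bfs_label_def i_def by auto
qed

lemma parent_idx_le: "j \<in> {1..card V} \<Longrightarrow> E (\<sigma> j) y \<Longrightarrow> parent_idx y \<le> j"
  unfolding parent_idx_def by (rule Least_le) simp

lemma
  assumes "y \<in> V" "y \<noteq> \<sigma> 1"
  shows parent_idx_in: "parent_idx y \<in> {1..card V}"
    and parent_idx_less: "parent_idx y < pos y"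
    and parent_edge: "E (parent y) y"
proof -
  obtain j where j: "j \<in> {1..<pos y}" "E (\<sigma> j) y"
    using earlier_nbr_exists[OF assms] by blast
  then have j': "j \<in> {1..card V} \<and> E (\<sigma> j) y"
    using pos_in[OF assms(1)] by auto
  show "parent_idx y \<in> {1..card V}" "E (parent y) y"
    using LeastI[where P = "\<lambda>j. j \<in> {1..card V} \<and> E (\<sigma> j) y", OF j']
    unfolding parent_idx_def parent_eq by auto
  show "parent_idx y < pos y"
    using parent_idx_le j' j by fastforce
qed

lemma parent_in: "y \<in> V \<Longrightarrow> y \<noteq> \<sigma> 1 \<Longrightarrow> parent y \<in> V"
  using parent_idx_in \<sigma>_in parent_eq by simp

lemma pos_parent: "y \<in> V \<Longrightarrow> y \<noteq> \<sigma> 1 \<Longrightarrow> pos (parent y) = parent_idx y"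
  using parent_idx_in pos_\<sigma> parent_eq by simp

lemma pos_parent_less: "y \<in> V \<Longrightarrow> y \<noteq> \<sigma> 1 \<Longrightarrow> pos (parent y) < pos y"
  using parent_idx_less pos_parent by simp

lemma parent_idx_mono:
  assumes x: "x \<in> V" "x \<noteq> \<sigma> 1" and y: "y \<in> V" "y \<noteq> \<sigma> 1" and "pos x < pos y"
  shows "parent_idx x \<le> parent_idx y"
proof (cases "parent_idx y < pos x")
  case True
  define i where "i = pos x"
  have i: "i \<in> {1..card V}" "\<sigma> i = x"
    using x pos_in \<sigma>_pos unfolding i_def by auto
  have y_unnumbered: "y \<in> V - \<sigma> ` {1..<i}"
    using not_numbered_before[OF y(1)] \<open>pos x < pos y\<close> y unfolding i_def by auto
  have y_label: "parent_idx y \<in> bfs_label E \<sigma> i y"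
    using parent_idx_in[OF y] parent_edge[OF y] True parent_eq
    unfolding bfs_label_def i_def by auto
  then have x_labelled: "bfs_label E \<sigma> i x \<noteq> {}"
    and x_first: "Min (bfs_label E \<sigma> i x) \<le> Min (bfs_label E \<sigma> i y)"
    using not_bfs_prec_nonempty[OF finite_bfs_label _ bfs_rule[OF i(1) y_unnumbered]] i(2)
    by auto
  have "Min (bfs_label E \<sigma> i x) \<in> bfs_label E \<sigma> i x"
    by (rule Min_in[OF finite_bfs_label x_labelled])
  then have "parent_idx x \<le> Min (bfs_label E \<sigma> i x)"
    using parent_idx_le i(1) unfolding bfs_label_def by auto
  also note x_first
  also have "Min (bfs_label E \<sigma> i y) \<le> parent_idx y"
    by (rule Min_le[OF finite_bfs_label y_label])
  finally show ?thesis .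
qed (use parent_idx_less[OF x] in auto)

function depth :: "'a \<Rightarrow> nat" where
  "depth y = (if y \<in> V \<and> y \<noteq> \<sigma> 1 then Suc (depth (parent y)) else 0)"
  by auto
termination
  by (relation "measure pos") (auto simp: pos_parent_less)

declare depth.simps [simp del]

lemma depth_root: "depth (\<sigma> 1) = 0"
  by (simp add: depth.simps)

lemma depth_parent: "y \<in> V \<Longrightarrow> y \<noteq> \<sigma> 1 \<Longrightarrow> depth y = Suc (depth (parent y))"
  by (simp add: depth.simps)

lemma depth_eq_0_iff: "y \<in> V \<Longrightarrow> depth y = 0 \<longleftrightarrow> y = \<sigma> 1"
  using depth_parent[of y] depth_root by (cases "y = \<sigma> 1") auto

lemma depth_mono:
  assumes "x \<in> V" "y \<in> V" "pos x \<le> pos y"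
  shows "depth x \<le> depth y"
  using assms
proof (induction "pos y" arbitrary: x y rule: less_induct)
  case less
  show ?case
  proof (cases "x = \<sigma> 1 \<or> x = y")
    case True
    then show ?thesis
      by (metis depth_root le0 order_refl)
  next
    case False
    then have "pos x < pos y"
      using less.prems \<sigma>_pos le_neq_implies_less by metis
    then have nonroot: "x \<noteq> \<sigma> 1" "y \<noteq> \<sigma> 1"
      using False pos_in[OF less.prems(1)] pos_eq_1_iff[OF less.prems(2)] by auto
    have "depth (parent x) \<le> depth (parent y)"
    proof (rule less.hyps)
      show "pos (parent y) < pos y"
        using pos_parent_less less.prems nonroot by simp
      show "pos (parent x) \<le> pos (parent y)"
        using pos_parent parent_idx_mono \<open>pos x < pos y\<close> less.prems nonroot by simp
    qed (use parent_in less.prems nonroot in auto)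
    then show ?thesis
      using depth_parent[OF less.prems(1) nonroot(1)] depth_parent[OF less.prems(2) nonroot(2)]
      by linarith
  qed
qed

lemma depth_edge:
  assumes "E x y"
  shows "depth y \<le> Suc (depth x)"
proof -
  have xy: "x \<in> V" "y \<in> V"
    using simple_graph_edge_in[OF graph assms] by auto
  show ?thesis
  proof (cases "pos y \<le> pos x")
    case True
    then show ?thesis
      using depth_mono[OF xy(2,1)] by simp
  next
    case False
    then have y: "y \<noteq> \<sigma> 1"
      using pos_eq_1_iff[OF xy(2)] pos_in[OF xy(1)] by auto
    have "parent_idx y \<le> pos x"
      using parent_idx_le[OF pos_in[OF xy(1)]] \<sigma>_pos[OF xy(1)] assms by simp
    then have "depth (parent y) \<le> depth x"
      using depth_mono[OF parent_in[OF xy(2) y] xy(1)] pos_parent[OF xy(2) y] by simp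
    then show ?thesis
      using depth_parent[OF xy(2) y] by linarith
  qed
qed

lemma same_depth_edge_nonroot:
  assumes "E x y" "depth x = depth y"
  shows "x \<noteq> \<sigma> 1" "y \<noteq> \<sigma> 1"
  using assms depth_root depth_eq_0_iff simple_graph_edge_in[OF graph] simple_graph_irrefl[OF graph]
  by metis+

lemma childless_if_nbrs_have_earlier_nbr:
  assumes "v \<in> V" "\<forall>w. E v w \<longrightarrow> w \<noteq> \<sigma> 1 \<longrightarrow> (\<exists>j\<in>{1..<pos v}. E (\<sigma> j) w)"
  shows "\<forall>w\<in>V. w \<noteq> \<sigma> 1 \<longrightarrow> parent w \<noteq> v"
proof (intro ballI impI notI)
  fix w assume w: "w \<in> V" "w \<noteq> \<sigma> 1" "parent w = v"
  then obtain j where "j \<in> {1..<pos v}" "E (\<sigma> j) w"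
    using assms(2) parent_edge[OF w(1,2)] by auto
  then have "parent_idx w < pos v"
    using parent_idx_le[of j w] pos_in[OF assms(1)] by fastforce
  then show False
    using pos_parent[OF w(1,2)] w(3) by simp
qed

lemma F_tree_eq: "F_tree V E \<sigma> = {{w, parent w} | w. w \<in> V \<and> w \<noteq> \<sigma> 1}"
  unfolding F_tree_def by auto

lemma F_branch_leaf_iff_childless:
  assumes v: "v \<in> V" "v \<noteq> \<sigma> 1"
  shows "F_branch_leaf V E \<sigma> v \<longleftrightarrow> (\<forall>w\<in>V. w \<noteq> \<sigma> 1 \<longrightarrow> parent w \<noteq> v)"
proof -
  define A where "A = {e \<in> F_tree V E \<sigma>. v \<in> e}"
  have own_edge: "{v, parent v} \<in> A"
    unfolding A_def F_tree_eq using v by auto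
  have "A = {{v, parent v}} \<longleftrightarrow> (\<forall>w\<in>V. w \<noteq> \<sigma> 1 \<longrightarrow> parent w \<noteq> v)"
  proof
    assume A: "A = {{v, parent v}}"
    show "\<forall>w\<in>V. w \<noteq> \<sigma> 1 \<longrightarrow> parent w \<noteq> v"
    proof (intro ballI impI notI)
      fix w assume w: "w \<in> V" "w \<noteq> \<sigma> 1" "parent w = v"
      then have "{w, parent w} \<in> A"
        unfolding A_def F_tree_eq by auto
      then have "{w, v} = {v, parent v}"
        using A w(3) by simp
      moreover have "w \<noteq> v"
        using parent_edge[OF w(1,2)] w(3) simple_graph_irrefl[OF graph] by auto
      ultimately have "w = parent v"
        by (auto simp: doubleton_eq_iff)
      then show False
        using pos_parent_less[OF v] pos_parent_less[OF w(1,2)] w(3) by simp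
    qed
  next
    assume childless: "\<forall>w\<in>V. w \<noteq> \<sigma> 1 \<longrightarrow> parent w \<noteq> v"
    have "e = {v, parent v}" if "e \<in> A" for e
      using that childless unfolding A_def F_tree_eq by auto
    then show "A = {{v, parent v}}"
      using own_edge by blast
  qed
  moreover have "card A = 1 \<longleftrightarrow> A = {{v, parent v}}"
    using own_edge by (auto simp: card_1_singleton_iff)
  ultimately show ?thesis
    using v unfolding F_branch_leaf_def A_def by simp
qed

end

section \<open>BFS in chordal graphs\<close>

context bfs_graph
begin

definition valley_path :: "nat \<Rightarrow> 'a list \<Rightarrow> bool" where
  "valley_path k Q \<longleftrightarrow> induced_path V E Q \<and> 3 \<le> length Q \<and>
     depth (hd Q) = k \<and> depth (last Q) = k \<and> (\<forall>y\<in>set Q. y \<noteq> hd Q \<and> y \<noteq> last Q \<longrightarrow> k < depth y)"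

lemma valley_path_end_parent:
  assumes "valley_path (Suc k) Q" "x \<in> {hd Q, last Q}"
  shows "parent x \<in> V" "E (parent x) x" "depth (parent x) = k" "parent x \<notin> set Q"
    "\<forall>y\<in>set Q. y \<noteq> hd Q \<and> y \<noteq> last Q \<longrightarrow> \<not> E (parent x) y"
proof -
  have Q: "Q \<noteq> []" "set Q \<subseteq> V"
    using assms(1) unfolding valley_path_def induced_path_def by auto
  have deep: "Suc k \<le> depth y" if "y \<in> set Q" for y
    using that assms(1) unfolding valley_path_def by fastforce
  have x: "x \<in> V" "x \<noteq> \<sigma> 1" "depth x = Suc k"
    using assms Q depth_root unfolding valley_path_def by auto
  show "parent x \<in> V" "E (parent x) x" "depth (parent x) = k"
    using parent_in[OF x(1,2)] parent_edge[OF x(1,2)] depth_parent[OF x(1,2)] x(3) by auto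
  then show "parent x \<notin> set Q"
    using deep by fastforce
  show "\<forall>y\<in>set Q. y \<noteq> hd Q \<and> y \<noteq> last Q \<longrightarrow> \<not> E (parent x) y"
    using assms(1) depth_edge[of "parent x"] \<open>depth (parent x) = k\<close>
    unfolding valley_path_def by fastforce
qed

end

locale chordal_bfs_graph = bfs_graph +
  assumes chordal: "chordal V E"
begin

text \<open>Chordality enters here: a common parent of the two ends, or a parent adjacent to the
  opposite end or to the other parent, would close an induced cycle of length at least four.\<close>

lemma valley_path_parents:
  assumes valley: "valley_path (Suc k) Q"
  shows "valley_path k (parent (hd Q) # Q @ [parent (last Q)])"
proof -
  have path: "induced_path V E Q" "3 \<le> length Q"
    using valley unfolding valley_path_def by auto
  have Q: "Q \<noteq> []" "distinct Q"
    using path by (auto simp: induced_path_def)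
  define ta tb where "ta = parent (hd Q)" and "tb = parent (last Q)"
  note ta = valley_path_end_parent[OF valley insertI1, folded ta_def]
  note tb = valley_path_end_parent[OF valley insertI2[OF singletonI], folded tb_def]
  have closing: False if "t \<in> {ta, tb}" "E t (hd Q)" "E t (last Q)" for t
    using chordal_no_closing_vertex[OF graph chordal path, of t] that ta tb by auto
  have sep: "ta \<noteq> tb" "\<not> E ta (last Q)" "\<not> E tb (hd Q)"
    using closing ta(2) tb(2) by auto
  have tl_Q: "y \<in> set Q \<and> y \<noteq> hd Q" if "y \<in> set (tl Q)" for y
    using that Q by (cases Q) auto
  have butlast_Q: "z \<in> set Q \<and> z \<noteq> last Q" if "z \<in> set (butlast Q)" for z
    using that Q in_set_butlastD
    by (metis append_butlast_last_id distinct_append disjoint_iff list.set_intros(1))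
  have P: "induced_path V E (ta # Q)"
    by (rule induced_path_Cons[OF graph path(1) Q(1) ta(1,4,2)])
      (use sep ta(5) tl_Q simple_graph_sym[OF graph] in fastforce)
  have "\<not> E ta tb"
  proof
    assume "E ta tb"
    show False
    proof (rule chordal_no_closing_vertex[OF graph chordal P _ tb(1)])
      show "\<forall>y\<in>set (ta # Q). y \<noteq> hd (ta # Q) \<and> y \<noteq> last (ta # Q) \<longrightarrow> \<not> E tb y"
        using Q(1) sep tb(5) by auto
    qed (use path(2) sep \<open>E ta tb\<close> tb Q(1) simple_graph_sym[OF graph] in auto)
  qed
  have "induced_path V E ((ta # Q) @ [tb])"
    by (rule induced_path_snoc[OF graph P])
      (use \<open>\<not> E ta tb\<close> tb Q(1) sep butlast_Q simple_graph_sym[OF graph] in fastforce)+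
  then show ?thesis
    using valley ta(3) tb(3) Q(1) unfolding valley_path_def ta_def tb_def by auto
qed

lemma no_valley_path: "\<not> valley_path k Q"
proof (induction k arbitrary: Q)
  case 0
  show ?case
  proof
    assume "valley_path 0 Q"
    then have Q: "set Q \<subseteq> V" "distinct Q" "3 \<le> length Q" "depth (hd Q) = 0" "depth (last Q) = 0"
      unfolding valley_path_def induced_path_def by auto
    moreover have "Q \<noteq> []"
      using Q(3) by auto
    ultimately have "hd Q \<in> V" "last Q \<in> V"
      by auto
    then have "hd Q = \<sigma> 1" "last Q = \<sigma> 1"
      using depth_eq_0_iff Q(4,5) by auto
    moreover have "hd Q \<noteq> last Q"
      using Q(2,3) by (cases Q) auto
    ultimately show False
      by simp
  qed
next
  case (Suc k)
  then show ?case
    using valley_path_parents by blast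
qed

lemma adjacent_if_common_deeper_nbr:
  assumes "E a y" "E b y" "depth a = depth b" "depth y = Suc (depth a)" "a \<noteq> b"
  shows "E a b"
proof (rule ccontr)
  assume "\<not> E a b"
  have V: "a \<in> V" "b \<in> V" "y \<in> V"
    using simple_graph_edge_in[OF graph] assms by auto
  have "induced_path V E [a, y, b]"
    using graph assms \<open>\<not> E a b\<close> V simple_graph_sym[OF graph] simple_graph_irrefl[OF graph]
    by (intro induced_path_Cons_Cons induced_path_single) auto
  then have "valley_path (depth a) [a, y, b]"
    using assms unfolding valley_path_def by auto
  then show False
    using no_valley_path by blast
qed

lemma parent_adj_if_other_parent_not:
  assumes "E r v" "depth r = depth v" "\<not> E (parent r) v"
  shows "E (parent v) r"
proof (rule ccontr)
  assume "\<not> E (parent v) r"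
  have V: "r \<in> V" "v \<in> V"
    using simple_graph_edge_in[OF graph assms(1)] by auto
  note nonroot = same_depth_edge_nonroot[OF assms(1,2)]
  define p q where "p = parent v" and "q = parent r"
  have p: "p \<in> V" "E p v" "depth v = Suc (depth p)"
    using parent_in parent_edge depth_parent V nonroot unfolding p_def by auto
  have q: "q \<in> V" "E q r" "depth r = Suc (depth q)" "\<not> E q v"
    using parent_in parent_edge depth_parent V nonroot assms(3) unfolding q_def by auto
  have neq: "p \<noteq> v" "p \<noteq> r" "q \<noteq> v" "q \<noteq> r" "v \<noteq> r" "q \<noteq> p"
    using p q assms simple_graph_irrefl[OF graph] by auto
  have path: "induced_path V E [p, v, r]"
    using graph p(1,2) V assms(1) \<open>\<not> E (parent v) r\<close> neq simple_graph_sym[OF graph]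
    unfolding p_def by (intro induced_path_Cons_Cons induced_path_single) auto
  show False
  proof (cases "E q p")
    case True
    show False
      by (rule chordal_no_closing_vertex[OF graph chordal path _ q(1)])
        (use True q(2,4) neq simple_graph_sym[OF graph] in auto)
  next
    case False
    have "induced_path V E ([p, v, r] @ [q])"
      by (rule induced_path_snoc[OF graph path])
        (use False q(1,2,4) neq simple_graph_sym[OF graph] in auto)
    then have "valley_path (depth p) [p, v, r, q]"
      using p q assms(2) unfolding valley_path_def by auto
    then show False
      using no_valley_path by blast
  qed
qed

lemma parent_adj_earlier_same_depth_nbr:
  assumes "E r v" "depth r = depth v" "pos r < pos v"
  shows "E (parent v) r"
proof (cases "parent r = parent v")
  case True
  then show ?thesis
    using parent_edge same_depth_edge_nonroot[OF assms(1,2)] simple_graph_edge_in[OF graph assms(1)]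
    by metis
next
  case False
  have V: "r \<in> V" "v \<in> V"
    using simple_graph_edge_in[OF graph assms(1)] by auto
  note nonroot = same_depth_edge_nonroot[OF assms(1,2)]
  have "pos (parent r) \<noteq> pos (parent v)"
    using False \<sigma>_pos parent_in V nonroot by metis
  then have "pos (parent r) < parent_idx v"
    using parent_idx_mono[OF V(1) nonroot(1) V(2) nonroot(2) assms(3)] pos_parent V nonroot by simp
  then have "\<not> E (parent r) v"
    using parent_idx_le[OF pos_in] \<sigma>_pos parent_in V nonroot by (metis leD)
  then show ?thesis
    using parent_adj_if_other_parent_not[OF assms(1,2)] by blast
qed

lemma same_depth_nbr_near_parent:
  assumes "E v x" "depth x = depth v"
  shows "E (parent v) x \<or> (\<exists>y. E v y \<and> E (parent v) y \<and> E y x)"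
proof -
  have V: "v \<in> V" "x \<in> V"
    using simple_graph_edge_in[OF graph assms(1)] by auto
  note nonroot = same_depth_edge_nonroot[OF assms(1) assms(2)[symmetric]]
  have sym: "E a b \<longleftrightarrow> E b a" for a b
    using simple_graph_sym[OF graph] .
  show ?thesis
  proof (cases "pos x < pos v")
    case True
    then show ?thesis
      using parent_adj_earlier_same_depth_nbr[of x v] assms sym by auto
  next
    case False
    then have "pos v < pos x"
      using V \<sigma>_pos assms(1) simple_graph_irrefl[OF graph] by (metis linorder_neqE_nat)
    then have c: "E (parent x) v"
      using parent_adj_earlier_same_depth_nbr[of v x] assms by simp
    have "depth (parent x) = depth (parent v)"
      using depth_parent V nonroot assms(2) by simp
    then have "parent x = parent v \<or> E (parent x) (parent v)"
      using adjacent_if_common_deeper_nbr[OF c parent_edge[OF V(1) nonroot(1)]]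
        depth_parent[OF V(1) nonroot(1)] by auto
    then show ?thesis
      using c parent_edge[OF V(2) nonroot(2)] sym by auto
  qed
qed

lemma deeper_nbr_of_childless_near_parent:
  assumes v: "v \<in> V" "v \<noteq> \<sigma> 1" and childless: "\<forall>w\<in>V. w \<noteq> \<sigma> 1 \<longrightarrow> parent w \<noteq> v"
    and "E v x" "depth x = Suc (depth v)"
  shows "\<exists>y. E v y \<and> E (parent v) y \<and> E y x"
proof -
  have x: "x \<in> V" "x \<noteq> \<sigma> 1"
    using simple_graph_edge_in[OF graph \<open>E v x\<close>] assms(5) depth_root by auto
  define r where "r = parent x"
  have r: "E r x" "depth r = depth v" "r \<noteq> v"
    using parent_edge depth_parent assms(5) childless x unfolding r_def by auto
  have "E r v"
    using adjacent_if_common_deeper_nbr[OF r(1) \<open>E v x\<close>] r assms(5) by simp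
  have "parent_idx x \<le> pos v"
    using parent_idx_le[OF pos_in[OF v(1)]] \<sigma>_pos[OF v(1)] \<open>E v x\<close> by simp
  moreover have "parent_idx x \<noteq> pos v"
    using r(3) \<sigma>_pos[OF v(1)] parent_eq unfolding r_def by auto
  ultimately have "pos r < pos v"
    using pos_parent[OF x] unfolding r_def by simp
  then have "E (parent v) r"
    using parent_adj_earlier_same_depth_nbr[OF \<open>E r v\<close> r(2)] by simp
  then show ?thesis
    using \<open>E r v\<close> r(1) simple_graph_sym[OF graph] by blast
qed

lemma nbhd_center_parent_if_childless:
  assumes v: "v \<in> V" "v \<noteq> \<sigma> 1" and childless: "\<forall>w\<in>V. w \<noteq> \<sigma> 1 \<longrightarrow> parent w \<noteq> v"
  shows "nbhd_center E v (parent v)"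
  unfolding nbhd_center_def
proof (intro conjI allI impI)
  have sym: "E a b \<longleftrightarrow> E b a" for a b
    using simple_graph_sym[OF graph] .
  show "E v (parent v)"
    using parent_edge[OF v] sym by simp
  fix x assume "E v x"
  have p: "E (parent v) v" "depth v = Suc (depth (parent v))"
    using parent_edge[OF v] depth_parent[OF v] by auto
  consider "depth x = depth (parent v)" | "depth x = depth v" | "depth x = Suc (depth v)"
    using depth_edge[OF \<open>E v x\<close>] depth_edge[of x v] \<open>E v x\<close> p(2) sym by fastforce
  then show "x = parent v \<or> E (parent v) x \<or> (\<exists>y. E v y \<and> E (parent v) y \<and> E y x)"
  proof cases
    case 1
    then show ?thesis
      using adjacent_if_common_deeper_nbr[of x v "parent v"] \<open>E v x\<close> p sym by auto
  next
    case 2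
    then show ?thesis
      using same_depth_nbr_near_parent[OF \<open>E v x\<close>] by blast
  next
    case 3
    then show ?thesis
      using deeper_nbr_of_childless_near_parent[OF v childless \<open>E v x\<close>] by blast
  qed
qed

end

section \<open>Constructing BFS orderings\<close>

lemma bfs_prec_maximal_exists:
  assumes "R \<noteq> {}"
  shows "\<exists>x\<in>R. \<forall>y\<in>R. \<not> bfs_prec (f x) (f y)"
proof (cases "\<exists>y\<in>R. f y \<noteq> {}")
  case True
  then obtain x where "x \<in> R" "f x \<noteq> {}" "\<forall>y. y \<in> R \<and> f y \<noteq> {} \<longrightarrow> Min (f x) \<le> Min (f y)"
    using ex_has_least_nat[of "\<lambda>y. y \<in> R \<and> f y \<noteq> {}" _ "\<lambda>y. Min (f y)"] by blast
  then show ?thesis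
    unfolding bfs_prec_def by (auto simp: not_less)
next
  case False
  then show ?thesis
    using assms unfolding bfs_prec_def by auto
qed

text \<open>Lists are read as vertex orderings with 1-based positions.\<close>

definition list_ordering :: "'a list \<Rightarrow> nat \<Rightarrow> 'a" where
  "list_ordering L i = L ! (i - 1)"

definition bfs_prefix :: "'a set \<Rightarrow> ('a \<Rightarrow> 'a \<Rightarrow> bool) \<Rightarrow> 'a list \<Rightarrow> bool" where
  "bfs_prefix V E L \<longleftrightarrow> distinct L \<and> set L \<subseteq> V \<and>
     (\<forall>i\<in>{1..length L}. \<forall>y\<in>V - list_ordering L ` {1..<i}.
        \<not> bfs_prec (bfs_label E (list_ordering L) i (list_ordering L i))
                    (bfs_label E (list_ordering L) i y))"

lemma list_ordering_append:
  "0 < i \<Longrightarrow> i \<le> length L \<Longrightarrow> list_ordering (L @ M) i = list_ordering L i"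
  unfolding list_ordering_def by (simp add: nth_append_left)

lemma list_ordering_append_below:
  "i \<le> Suc (length L) \<Longrightarrow> j \<in> {1..<i} \<Longrightarrow> list_ordering (L @ M) j = list_ordering L j"
  by (rule list_ordering_append) auto

lemma bfs_label_list_ordering_append:
  "i \<le> Suc (length L) \<Longrightarrow>
     bfs_label E (list_ordering (L @ M)) i y = bfs_label E (list_ordering L) i y"
  unfolding bfs_label_def using list_ordering_append_below[of i L _ M] by auto

lemma list_ordering_append_image:
  "i \<le> Suc (length L) \<Longrightarrow> list_ordering (L @ M) ` {1..<i} = list_ordering L ` {1..<i}"
  using list_ordering_append_below[of i L _ M] by (intro image_cong) auto

lemma list_ordering_image: "list_ordering L ` {1..length L} = set L"
proof -
  have "{1..length L} = Suc ` {..<length L}"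
    by (simp add: atLeast1_atMost_eq_remove0 lessThan_Suc_atMost[symmetric] image_Suc_lessThan)
  then show ?thesis
    unfolding list_ordering_def by (simp add: image_image set_conv_nth) blast
qed

lemma bfs_prefix_snoc:
  assumes L: "bfs_prefix V E L" and unlisted: "set L \<noteq> V"
  shows "\<exists>y. bfs_prefix V E (L @ [y])"
proof -
  define i where "i = Suc (length L)"
  define lab where "lab = bfs_label E (list_ordering L) i"
  have "V - set L \<noteq> {}"
    using L unlisted unfolding bfs_prefix_def by auto
  then obtain y0 where y0: "y0 \<in> V - set L" "\<forall>y\<in>V - set L. \<not> bfs_prec (lab y0) (lab y)"
    using bfs_prec_maximal_exists[of "V - set L" lab] by blast
  have "bfs_prefix V E (L @ [y0])"
    unfolding bfs_prefix_def
  proof (intro conjI ballI)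
    show "distinct (L @ [y0])" "set (L @ [y0]) \<subseteq> V"
      using L y0(1) unfolding bfs_prefix_def by auto
    fix j y
    assume j: "j \<in> {1..length (L @ [y0])}" and y: "y \<in> V - list_ordering (L @ [y0]) ` {1..<j}"
    show "\<not> bfs_prec (bfs_label E (list_ordering (L @ [y0])) j (list_ordering (L @ [y0]) j))
                     (bfs_label E (list_ordering (L @ [y0])) j y)"
    proof (cases "j = i")
      case True
      have "list_ordering (L @ [y0]) ` {1..<j} = set L"
        using list_ordering_append_image[of j L "[y0]"] list_ordering_image[of L] True
        unfolding i_def by (simp add: atLeastLessThanSuc_atLeastAtMost)
      moreover have "list_ordering (L @ [y0]) j = y0"
        unfolding list_ordering_def True i_def by simp
      ultimately show ?thesis
        using y0(2) y True bfs_label_list_ordering_append[of j L E "[y0]"]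
        unfolding lab_def i_def by simp
    next
      case False
      then have "j \<in> {1..length L}"
        using j unfolding i_def by auto
      then show ?thesis
        using L y list_ordering_append[of j L "[y0]"] list_ordering_append_image[of j L "[y0]"]
          bfs_label_list_ordering_append[of j L E "[y0]"]
        unfolding bfs_prefix_def by auto
    qed
  qed
  then show ?thesis ..
qed

lemma bfs_prefix_length_le: "finite V \<Longrightarrow> bfs_prefix V E L \<Longrightarrow> length L \<le> card V"
  unfolding bfs_prefix_def by (metis card_mono distinct_card)

lemma bfs_prefix_extend:
  assumes "finite V" "bfs_prefix V E L"
  shows "\<exists>M. bfs_prefix V E (L @ M) \<and> length (L @ M) = card V"
  using assms(2)
proof (induction "card V - length L" arbitrary: L)
  case 0
  then show ?case
    using bfs_prefix_length_le[OF assms(1)] by (intro exI[of _ "[]"]) fastforce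
next
  case (Suc k)
  have "set L \<noteq> V"
    using Suc.hyps(2) Suc.prems distinct_card unfolding bfs_prefix_def by fastforce
  then obtain y where "bfs_prefix V E (L @ [y])"
    using bfs_prefix_snoc[OF Suc.prems] by blast
  moreover have "k = card V - length (L @ [y])"
    using Suc.hyps(2) by simp
  ultimately obtain M where "bfs_prefix V E ((L @ [y]) @ M) \<and> length ((L @ [y]) @ M) = card V"
    using Suc.hyps(1) by blast
  then show ?case
    by (intro exI[of _ "y # M"]) simp
qed

lemma bfs_prefix_full_bfs_ordering:
  assumes "finite V" "bfs_prefix V E L" "length L = card V"
  shows "bfs_ordering V E (list_ordering L)"
proof -
  have L: "distinct L" "set L \<subseteq> V"
    using assms(2) unfolding bfs_prefix_def by auto
  then have "set L = V"
    using assms(1,3) distinct_card card_subset_eq by metis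
  have "inj_on (list_ordering L) {1..card V}"
    using L(1) assms(3) unfolding list_ordering_def inj_on_def
    by (auto simp: nth_eq_iff_index_eq)
  then have "vertex_ordering V (list_ordering L)"
    using list_ordering_image[of L] \<open>set L = V\<close> assms(3)
    unfolding vertex_ordering_def bij_betw_def by simp
  then show ?thesis
    using assms(2,3) unfolding bfs_prefix_def bfs_ordering_def by simp
qed

lemma bfs_prefix_extends_to_bfs_ordering:
  assumes "finite V" "bfs_prefix V E L"
  obtains \<sigma> where "bfs_ordering V E \<sigma>" "\<And>i. 0 < i \<Longrightarrow> i \<le> length L \<Longrightarrow> \<sigma> i = L ! (i - 1)"
proof -
  obtain M where "bfs_prefix V E (L @ M)" "length (L @ M) = card V"
    using bfs_prefix_extend[OF assms] by blast
  then show ?thesis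
    using that[of "list_ordering (L @ M)"] bfs_prefix_full_bfs_ordering[OF assms(1)]
      list_ordering_append[of _ L M]
    unfolding list_ordering_def by simp
qed

text \<open>Neighbours of the first vertex may follow it in any order: their labels contain 1, the
  smallest possible entry.\<close>

lemma bfs_prefix_root_nbrs:
  assumes G: "simple_graph V E" and "c \<in> V" "distinct ns" "set ns \<subseteq> nbhd E c"
  shows "bfs_prefix V E (c # ns)"
  unfolding bfs_prefix_def
proof (intro conjI ballI)
  have ns: "E c y" "y \<in> V" if "y \<in> set ns" for y
    using that assms(4) simple_graph_edge_in[OF G] unfolding nbhd_def by auto
  then show "distinct (c # ns)" "set (c # ns) \<subseteq> V"
    using assms(2,3) simple_graph_irrefl[OF G] by auto
  fix i y
  assume i: "i \<in> {1..length (c # ns)}"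
  let ?lab = "bfs_label E (list_ordering (c # ns)) i"
  show "\<not> bfs_prec (?lab (list_ordering (c # ns) i)) (?lab y)"
  proof (cases "i = 1")
    case True
    then show ?thesis
      unfolding bfs_prec_def bfs_label_def by auto
  next
    case False
    then have "list_ordering (c # ns) i \<in> set ns"
      using i unfolding list_ordering_def by (auto simp: nth_Cons')
    then have one: "1 \<in> ?lab (list_ordering (c # ns) i)"
      using ns False i unfolding bfs_label_def list_ordering_def by auto
    then have "Min (?lab (list_ordering (c # ns) i)) \<le> 1"
      by (rule Min_le[OF finite_bfs_label])
    moreover have "1 \<le> Min (?lab y)" if "?lab y \<noteq> {}"
      using Min_in[OF finite_bfs_label that] unfolding bfs_label_def by blast
    ultimately show ?thesis
      using one unfolding bfs_prec_def by fastforce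
  qed
qed

lemma bfs_ordering_nbrs_first:
  assumes G: "simple_graph V E" and c: "c \<in> V" "E c v"
  obtains \<sigma> k where "bfs_ordering V E \<sigma>" "\<sigma> 1 = c" "k \<in> {1..card V}" "\<sigma> k = v"
    "\<And>y. E c y \<Longrightarrow> y \<noteq> v \<Longrightarrow> \<exists>j\<in>{1..<k}. \<sigma> j = y"
proof -
  have fin: "finite V"
    using G unfolding simple_graph_def by simp
  have "finite (nbhd E c - {v})"
    using fin simple_graph_edge_in[OF G] unfolding nbhd_def
    by (metis (no_types, lifting) finite_Diff finite_subset mem_Collect_eq subsetI)
  then obtain cs where cs: "distinct cs" "set cs = nbhd E c - {v}"
    using finite_distinct_list by blast
  have L: "bfs_prefix V E (c # cs @ [v])"
    using c cs by (intro bfs_prefix_root_nbrs[OF G]) (auto simp: nbhd_def)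
  obtain \<sigma> where \<sigma>: "bfs_ordering V E \<sigma>"
    and prefix: "\<And>i. 0 < i \<Longrightarrow> i \<le> length (c # cs @ [v]) \<Longrightarrow> \<sigma> i = (c # cs @ [v]) ! (i - 1)"
    using bfs_prefix_extends_to_bfs_ordering[OF fin L] by blast
  define k where "k = length cs + 2"
  have k: "k \<in> {1..card V}"
    using bfs_prefix_length_le[OF fin L] unfolding k_def by simp
  have ends: "\<sigma> 1 = c" "\<sigma> k = v"
    using prefix[of 1] prefix[of k] unfolding k_def by (simp_all add: nth_append)
  have "\<exists>j\<in>{1..<k}. \<sigma> j = y" if "E c y" "y \<noteq> v" for y
  proof -
    have "y \<in> set cs"
      using that cs(2) by (simp add: nbhd_def)
    then obtain l where "l < length cs" "cs ! l = y"
      by (auto simp: in_set_conv_nth)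
    then show ?thesis
      using prefix[of "l + 2"] unfolding k_def by (intro bexI[of _ "l + 2"]) (auto simp: nth_append)
  qed
  then show ?thesis
    by (rule that[OF \<sigma> ends(1) k ends(2)])
qed

lemma bfs_ordering_with_F_branch_leaf:
  assumes G: "simple_graph V E" and "connected_graph V E" and v: "v \<in> V"
    and center: "nbhd_center E v c"
  shows "\<exists>\<sigma>. bfs_ordering V E \<sigma> \<and> F_branch_leaf V E \<sigma> v"
proof -
  have c: "E c v" "c \<in> V" "c \<noteq> v"
    using center simple_graph_sym[OF G] simple_graph_edge_in[OF G] simple_graph_irrefl[OF G]
    unfolding nbhd_center_def by metis+
  obtain \<sigma> k where \<sigma>: "bfs_ordering V E \<sigma>" and root: "\<sigma> 1 = c"
    and k: "k \<in> {1..card V}" "\<sigma> k = v" and before: "\<And>y. E c y \<Longrightarrow> y \<noteq> v \<Longrightarrow> \<exists>j\<in>{1..<k}. \<sigma> j = y"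
    using bfs_ordering_nbrs_first[OF G c(2,1)] by metis
  have "1 < k"
    using k root c(3) by (cases "k = 1") auto
  interpret bfs_graph V E \<sigma>
    using G \<open>connected_graph V E\<close> \<sigma> by unfold_locales
  have "\<exists>j\<in>{1..<pos v}. E (\<sigma> j) w" if w: "E v w" "w \<noteq> \<sigma> 1" for w
  proof -
    consider "E c w" | y where "E v y" "E c y" "E y w"
      using center w root unfolding nbhd_center_def by blast
    then have "\<exists>j\<in>{1..<k}. E (\<sigma> j) w"
    proof cases
      case 1
      then show ?thesis
        using root \<open>1 < k\<close> by (intro bexI[of _ 1]) auto
    next
      case 2
      then show ?thesis
        using before[of y] simple_graph_irrefl[OF G] by fastforce
    qed
    then show ?thesis
      using pos_\<sigma>[OF k(1)] k(2) by simp
  qed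
  then have "\<forall>w\<in>V. w \<noteq> \<sigma> 1 \<longrightarrow> parent w \<noteq> v"
    using childless_if_nbrs_have_earlier_nbr[OF v] by blast
  moreover have "v \<noteq> \<sigma> 1"
    using root c(3) by simp
  ultimately show ?thesis
    using F_branch_leaf_iff_childless[OF v] \<sigma> by blast
qed

theorem theorem13:
  fixes V :: "'a set" and E :: "'a \<Rightarrow> 'a \<Rightarrow> bool" and v :: 'a
  assumes "simple_graph V E" and "connected_graph V E" and "chordal V E"
    and "card V \<ge> 2" and "v \<in> V"
  shows "(\<exists>\<sigma>. bfs_ordering V E \<sigma> \<and> F_branch_leaf V E \<sigma> v)
         \<longleftrightarrow> radius (nbhd E v) (induced_adj E (nbhd E v)) \<le> 2"
  unfolding radius_nbhd_le_2_iff
proof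
  assume "\<exists>\<sigma>. bfs_ordering V E \<sigma> \<and> F_branch_leaf V E \<sigma> v"
  then obtain \<sigma> where \<sigma>: "bfs_ordering V E \<sigma>" and leaf: "F_branch_leaf V E \<sigma> v"
    by blast
  interpret chordal_bfs_graph V E \<sigma>
    using assms \<sigma> by unfold_locales
  have "v \<noteq> \<sigma> 1"
    using leaf unfolding F_branch_leaf_def by simp
  then have "\<forall>w\<in>V. w \<noteq> \<sigma> 1 \<longrightarrow> parent w \<noteq> v"
    using F_branch_leaf_iff_childless[OF assms(5)] leaf by simp
  then show "\<exists>c. nbhd_center E v c"
    using nbhd_center_parent_if_childless[OF assms(5) \<open>v \<noteq> \<sigma> 1\<close>] by blast
next
  assume "\<exists>c. nbhd_center E v c"
  then show "\<exists>\<sigma>. bfs_ordering V E \<sigma> \<and> F_branch_leaf V E \<sigma> v"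
    using bfs_ordering_with_F_branch_leaf[OF assms(1,2,5)] by blast
qed

end
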